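(* For every $n\ge0$, the simplex $\mathbf{\Delta}^n$ is fibrant in the Thomason model structure on $\mathbf{Cpx}$, i.e. $\mathrm{Ex}^2\mathrm{Sing}(\mathbf{\Delta}^n)$ is a Kan complex.
   Context: A simplicial complex consists of a vertex set and a collection of nonempty finite subsets (simplices) containing all singletons and closed under nonempty subsets; maps are vertex functions preserving simplices; $\mathbf{Cpx}$ is the category. $\mathbf{\Delta}^n$ is the complex on $\{0,\dots,n\}$ in which every nonempty subset is a simplex. $\mathrm{Sing}(K)_n=\mathbf{Cpx}(\mathbf{\Delta}^n,K)$ with simplicial operators by precomposition; $\mathrm{Ex}$ is the right adjoint of barycentric subdivision of simplicial sets. In the Thomason model structure on $\mathbf{Cpx}$ a map $f$ is a fibration iff $\mathrm{Ex}^2\mathrm{Sing}(f)$ is a Kan fibration. *)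

theory Defs
  imports "HOL-Library.FuncSet"
begin

record 'v cpx =
  cverts :: "'v set"
  csimps :: "'v set set"

definition is_cpx :: "'v cpx \<Rightarrow> bool" where
  "is_cpx K \<longleftrightarrow>
     (\<forall>s\<in>csimps K. s \<noteq> {} \<and> finite s \<and> s \<subseteq> cverts K) \<and>
     (\<forall>v\<in>cverts K. {v} \<in> csimps K) \<and>
     (\<forall>s\<in>csimps K. \<forall>t. t \<noteq> {} \<and> t \<subseteq> s \<longrightarrow> t \<in> csimps K)"

definition cpx_map :: "'v cpx \<Rightarrow> 'w cpx \<Rightarrow> ('v \<Rightarrow> 'w) \<Rightarrow> bool" where
  "cpx_map K L f \<longleftrightarrow>
     (\<forall>v\<in>cverts K. f v \<in> cverts L) \<and> (\<forall>s\<in>csimps K. f ` s \<in> csimps L)"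

definition Delta_cpx :: "nat \<Rightarrow> nat cpx" where
  "Delta_cpx n = \<lparr> cverts = {0..n}, csimps = {s. s \<noteq> {} \<and> s \<subseteq> {0..n}} \<rparr>"

text \<open>A simplicial set is given by its sets of \<open>n\<close>-simplices \<open>sobj X n\<close> and its
simplicial operators: for a monotone map \<open>\<theta> : [m] \<rightarrow> [n]\<close>,
\<open>sop X m n \<theta>\<close> maps \<open>n\<close>-simplices to \<open>m\<close>-simplices.\<close>

record 'a sset =
  sobj :: "nat \<Rightarrow> 'a set"
  sop  :: "nat \<Rightarrow> nat \<Rightarrow> (nat \<Rightarrow> nat) \<Rightarrow> 'a \<Rightarrow> 'a"

definition mono_op :: "nat \<Rightarrow> nat \<Rightarrow> (nat \<Rightarrow> nat) \<Rightarrow> bool" where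
  "mono_op m n \<theta> \<longleftrightarrow> (\<forall>i\<le>m. \<theta> i \<le> n) \<and> (\<forall>i j. i \<le> j \<and> j \<le> m \<longrightarrow> \<theta> i \<le> \<theta> j)"

definition coface :: "nat \<Rightarrow> nat \<Rightarrow> nat" where
  "coface i j = (if j < i then j else Suc j)"

definition face :: "'a sset \<Rightarrow> nat \<Rightarrow> nat \<Rightarrow> 'a \<Rightarrow> 'a" where
  "face X n i x = sop X (n - 1) n (coface i) x"

text \<open>Kan complex: every horn \<open>\<Lambda>^n_k \<rightarrow> X\<close> (given as a compatible family of
\<open>(n-1)\<close>-simplices \<open>y i\<close>, \<open>i \<noteq> k\<close>) extends to an \<open>n\<close>-simplex.\<close>
definition kan_complex :: "'a sset \<Rightarrow> bool" where
  "kan_complex X \<longleftrightarrow>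
    (\<forall>n k (y :: nat \<Rightarrow> 'a). 1 \<le> n \<and> k \<le> n \<and>
       (\<forall>i\<le>n. i \<noteq> k \<longrightarrow> y i \<in> sobj X (n - 1)) \<and>
       (\<forall>i j. i < j \<and> j \<le> n \<and> i \<noteq> k \<and> j \<noteq> k \<longrightarrow>
              face X (n - 1) i (y j) = face X (n - 1) (j - 1) (y i))
     \<longrightarrow> (\<exists>x\<in>sobj X n. \<forall>i\<le>n. i \<noteq> k \<longrightarrow> face X n i x = y i))"

definition Sing :: "'v cpx \<Rightarrow> (nat \<Rightarrow> 'v) sset" where
  "Sing K = \<lparr> sobj = (\<lambda>n. {\<sigma>. \<sigma> \<in> extensional {0..n} \<and> cpx_map (Delta_cpx n) K \<sigma>}),
              sop = (\<lambda>m n \<theta> \<sigma>. restrict (\<sigma> \<circ> \<theta>) {0..m}) \<rparr>"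

text \<open>The \<open>k\<close>-simplices of \<open>sd \<Delta>^n\<close>, the nerve of the poset of nonempty subsets
of \<open>{0..n}\<close>: chains \<open>c 0 \<subseteq> \<dots> \<subseteq> c k\<close> (extended by \<open>{}\<close> beyond \<open>k\<close>).\<close>
definition sd_simp :: "nat \<Rightarrow> nat \<Rightarrow> (nat \<Rightarrow> nat set) set" where
  "sd_simp n k = {c. (\<forall>i\<le>k. c i \<noteq> {} \<and> c i \<subseteq> {0..n}) \<and>
                     (\<forall>i j. i \<le> j \<and> j \<le> k \<longrightarrow> c i \<subseteq> c j) \<and>
                     (\<forall>i>k. c i = {})}"

definition sd_op :: "nat \<Rightarrow> (nat \<Rightarrow> nat) \<Rightarrow> (nat \<Rightarrow> nat set) \<Rightarrow> (nat \<Rightarrow> nat set)" where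
  "sd_op m \<theta> c = (\<lambda>i. if i \<le> m then c (\<theta> i) else {})"

text \<open>\<open>sd\<close> applied to \<open>\<theta> : \<Delta>^m \<rightarrow> \<Delta>^n\<close>, on \<open>k\<close>-simplices: take images.\<close>
definition sd_map :: "nat \<Rightarrow> (nat \<Rightarrow> nat) \<Rightarrow> (nat \<Rightarrow> nat set) \<Rightarrow> (nat \<Rightarrow> nat set)" where
  "sd_map k \<theta> c = (\<lambda>i. if i \<le> k then \<theta> ` c i else {})"

definition sd_hom :: "nat \<Rightarrow> 'a sset \<Rightarrow> (nat \<Rightarrow> (nat \<Rightarrow> nat set) \<Rightarrow> 'a) set" where
  "sd_hom n X = {f. (\<forall>k c. c \<in> sd_simp n k \<longrightarrow> f k c \<in> sobj X k) \<and>
                    (\<forall>k c. c \<notin> sd_simp n k \<longrightarrow> f k c = undefined) \<and>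
                    (\<forall>m k \<theta> c. mono_op m k \<theta> \<and> c \<in> sd_simp n k \<longrightarrow>
                        f m (sd_op m \<theta> c) = sop X m k \<theta> (f k c))}"

text \<open>\<open>Ex X\<close>: \<open>(Ex X)_n = sSet(sd \<Delta>^n, X)\<close>, operators by precomposition with \<open>sd \<theta>\<close>.\<close>
definition Ex :: "'a sset \<Rightarrow> (nat \<Rightarrow> (nat \<Rightarrow> nat set) \<Rightarrow> 'a) sset" where
  "Ex X = \<lparr> sobj = (\<lambda>n. sd_hom n X),
            sop = (\<lambda>m n \<theta> f. (\<lambda>k c. if c \<in> sd_simp m k then f k (sd_map k \<theta> c) else undefined)) \<rparr>"

end

theory Submission
  imports Defs
begin

text \<open>Every vertex map into \<open>\<Delta>\<^sup>N\<close> is simplicial, so \<open>Sing \<Delta>\<^sup>N\<close> is the codiscrete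
simplicial set on \<open>{0..N}\<close>, and a \<open>k\<close>-simplex of \<open>Ex Sing \<Delta>\<^sup>N\<close> amounts to a labelling
of the nonempty subsets of \<open>{0..k}\<close> by points of \<open>{0..N}\<close>.

Given a horn \<open>y\<close> in \<open>Ex\<^sup>2 Sing \<Delta>\<^sup>N\<close> missing the face \<open>K\<close>, the filler sends a chain
\<open>c\<close> of faces of \<open>\<Delta>\<^sup>n\<close> to the labelling whose value at \<open>A\<close> is read off from \<open>y\<^sub>i\<close> for
any \<open>i \<noteq> K\<close> missing from \<open>c (Max A)\<close>: all \<open>c a\<close> with \<open>a \<in> A\<close> then lie in the \<open>i\<close>-th
face. The choice of \<open>i\<close> does not matter. First, the label of \<open>A\<close> depends only on the
restriction of the chain to \<open>A\<close>, as one sees by precomposing with a monotone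
retraction of \<open>{0..k}\<close> onto \<open>A\<close>. After this retraction the chain misses both candidate
indices \<open>i < i'\<close>, so it comes from a face of codimension two, where the compatibility
of the horn identifies the two readings.\<close>

lemma sobj_Ex [simp]: "sobj (Ex X) n = sd_hom n X"
  by (simp add: Ex_def)

lemma sop_Ex [simp]:
  "sop (Ex X) m n \<theta> f = (\<lambda>k c. if c \<in> sd_simp m k then f k (sd_map k \<theta> c) else undefined)"
  by (simp add: Ex_def)

lemma sop_Sing [simp]: "sop (Sing K) m n \<theta> \<sigma> = restrict (\<sigma> \<circ> \<theta>) {0..m}"
  by (simp add: Sing_def)

lemma sobj_Sing_subset_extensional: "sobj (Sing K) n \<subseteq> extensional {0..n}"
  by (auto simp: Sing_def)

lemma sobj_Sing_Delta:
  "sobj (Sing (Delta_cpx N)) n = {\<sigma>. \<sigma> \<in> extensional {0..n} \<and> (\<forall>i\<le>n. \<sigma> i \<le> N)}"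
  unfolding Sing_def cpx_map_def Delta_cpx_def by auto

lemma face_Ex:
  "c \<in> sd_simp (n - 1) k \<Longrightarrow> face (Ex X) n i f k c = f k (sd_map k (coface i) c)"
  by (simp add: face_def)

lemma mono_op_le: "mono_op m n \<theta> \<Longrightarrow> i \<le> m \<Longrightarrow> \<theta> i \<le> n"
  and mono_op_mono: "mono_op m n \<theta> \<Longrightarrow> i \<le> j \<Longrightarrow> j \<le> m \<Longrightarrow> \<theta> i \<le> \<theta> j"
  by (auto simp: mono_op_def)

lemma sd_simpD:
  assumes "c \<in> sd_simp n k"
  shows sd_simp_nonempty: "l \<le> k \<Longrightarrow> c l \<noteq> {}"
    and sd_simp_subset: "l \<le> k \<Longrightarrow> c l \<subseteq> {0..n}"
    and sd_simp_mono: "a \<le> b \<Longrightarrow> b \<le> k \<Longrightarrow> c a \<subseteq> c b"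
    and sd_simp_empty: "k < l \<Longrightarrow> c l = {}"
  using assms by (auto simp: sd_simp_def)

lemma sd_op_in_sd_simp: "mono_op m k \<theta> \<Longrightarrow> c \<in> sd_simp n k \<Longrightarrow> sd_op m \<theta> c \<in> sd_simp n m"
  unfolding sd_simp_def sd_op_def mono_op_def by auto

lemma sd_map_in_sd_simp:
  "(\<And>i. i \<le> m \<Longrightarrow> \<theta> i \<le> n) \<Longrightarrow> c \<in> sd_simp m k \<Longrightarrow> sd_map k \<theta> c \<in> sd_simp n k"
  unfolding sd_simp_def sd_map_def by (auto simp: image_mono) (meson atLeastAtMost_iff subset_iff)+

definition vertex_chain :: "nat set \<Rightarrow> nat \<Rightarrow> nat set" where
  "vertex_chain A = (\<lambda>i. if i = 0 then A else {})"

lemma vertex_chain_in_sd_simp: "A \<noteq> {} \<Longrightarrow> A \<subseteq> {0..n} \<Longrightarrow> vertex_chain A \<in> sd_simp n 0"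
  unfolding sd_simp_def vertex_chain_def by auto

lemma sd_op_zero: "sd_op 0 \<theta> c = vertex_chain (c (\<theta> 0))"
  by (auto simp: sd_op_def vertex_chain_def fun_eq_iff)

lemma sd_map_vertex_chain: "sd_map 0 \<theta> (vertex_chain A) = vertex_chain (\<theta> ` A)"
  by (auto simp: sd_map_def vertex_chain_def fun_eq_iff)

lemma monotone_retraction_exists:
  assumes "A \<subseteq> {0..k}" "A \<noteq> {}"
  obtains \<rho> where "mono_op k k \<rho>" "\<And>a. a \<in> A \<Longrightarrow> \<rho> a = a" "\<And>a. \<rho> a \<in> A"
proof
  have fin: "finite A" using assms(1) finite_subset by blast
  define \<rho> where "\<rho> a = (if \<exists>b\<in>A. a \<le> b then LEAST b. b \<in> A \<and> a \<le> b else Max A)" for a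
  have least: "\<rho> a \<in> A \<and> a \<le> \<rho> a" if "\<exists>b\<in>A. a \<le> b" for a
    using that LeastI_ex[of "\<lambda>b. b \<in> A \<and> a \<le> b"] unfolding \<rho>_def by auto
  show in_A: "\<rho> a \<in> A" for a
    using least[of a] fin assms(2) by (cases "\<exists>b\<in>A. a \<le> b") (auto simp: \<rho>_def)
  show "\<rho> a = a" if "a \<in> A" for a
    using that by (auto simp: \<rho>_def intro: Least_equality)
  have "\<rho> i \<le> \<rho> j" if "i \<le> j" for i j
  proof (cases "\<exists>b\<in>A. j \<le> b")
    case True
    with least[OF True] that have "\<rho> j \<in> A \<and> i \<le> \<rho> j" by auto
    then have "(LEAST b. b \<in> A \<and> i \<le> b) \<le> \<rho> j" by (rule Least_le)
    moreover have "\<exists>b\<in>A. i \<le> b" using True that le_trans by blast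
    ultimately show ?thesis unfolding \<rho>_def[of i] by simp
  next
    case False
    then show ?thesis using in_A[of i] fin by (simp add: \<rho>_def)
  qed
  then show "mono_op k k \<rho>"
    using in_A assms(1) by (fastforce simp: mono_op_def)
qed

lemma inj_coface: "inj (coface i)"
  unfolding inj_def coface_def by (auto split: if_splits)

lemma coface_neq: "coface i v \<noteq> i"
  unfolding coface_def by auto

lemma coface_surj: "w \<noteq> i \<Longrightarrow> w \<in> range (coface i)"
  unfolding coface_def by (rule range_eqI[of _ _ "if w < i then w else w - 1"]) auto

lemma coface_coface: "i < i' \<Longrightarrow> coface i' (coface i v) = coface i (coface (i' - 1) v)"
  unfolding coface_def by auto

lemma coface_le_iff: "i \<le> n \<Longrightarrow> coface i v \<le> n \<longleftrightarrow> v < n"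
  unfolding coface_def by auto

lemma sd_map_coface_in_sd_simp:
  "0 < n \<Longrightarrow> i \<le> n \<Longrightarrow> c \<in> sd_simp (n - 1) k \<Longrightarrow> sd_map k (coface i) c \<in> sd_simp n k"
  by (rule sd_map_in_sd_simp) (simp_all add: coface_le_iff)

definition coface_preimage :: "nat \<Rightarrow> (nat \<Rightarrow> nat set) \<Rightarrow> nat \<Rightarrow> nat set" where
  "coface_preimage i c = (\<lambda>a. coface i -` c a)"

lemma coface_preimage_in_sd_simp:
  assumes c: "c \<in> sd_simp n k" and "i \<le> n" "i \<notin> c 0"
  shows "coface_preimage i c \<in> sd_simp (n - 1) k"
  unfolding sd_simp_def
proof (intro CollectI conjI allI impI)
  fix a assume "a \<le> k"
  obtain v where "v \<in> c 0" using sd_simp_nonempty[OF c] by blast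
  moreover from this obtain w where "coface i w = v"
    using coface_surj \<open>i \<notin> c 0\<close> by (metis rangeE)
  ultimately show "coface_preimage i c a \<noteq> {}"
    using sd_simp_mono[OF c _ \<open>a \<le> k\<close>] by (auto simp: coface_preimage_def)
  show "coface_preimage i c a \<subseteq> {0..n - 1}"
    using sd_simp_subset[OF c \<open>a \<le> k\<close>] coface_le_iff[OF \<open>i \<le> n\<close>]
    by (fastforce simp: coface_preimage_def)
next
  fix a b assume "a \<le> b \<and> b \<le> k"
  then show "coface_preimage i c a \<subseteq> coface_preimage i c b"
    using sd_simp_mono[OF c] by (auto simp: coface_preimage_def)
next
  fix a assume "k < a"
  then show "coface_preimage i c a = {}"
    using sd_simp_empty[OF c] by (simp add: coface_preimage_def)
qed

lemma coface_preimage_sd_map: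
  "c \<in> sd_simp m k \<Longrightarrow> coface_preimage i (sd_map k (coface i) c) = c"
  by (auto simp: fun_eq_iff coface_preimage_def sd_map_def sd_simp_empty
      inj_vimage_image_eq[OF inj_coface])

lemma sd_map_coface_preimage:
  assumes "c \<in> sd_simp n k" "\<And>a. i \<notin> c a"
  shows "sd_map k (coface i) (coface_preimage i c) = c"
proof
  fix a
  have "c a \<subseteq> range (coface i)" by (metis assms(2) coface_surj subsetI)
  then show "sd_map k (coface i) (coface_preimage i c) a = c a"
    using sd_simp_empty[OF assms(1), of a]
    by (auto simp: sd_map_def coface_preimage_def image_vimage_eq Int_absorb2)
qed

lemma coface_preimage_coface_preimage:
  "i < i' \<Longrightarrow>
    coface_preimage i (coface_preimage i' c) = coface_preimage (i' - 1) (coface_preimage i c)"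
  by (simp add: fun_eq_iff vimage_def coface_preimage_def coface_coface)

lemma coface_preimage_sd_op: "coface_preimage i (sd_op m \<theta> c) = sd_op m \<theta> (coface_preimage i c)"
  by (auto simp: fun_eq_iff coface_preimage_def sd_op_def)

lemma sd_homI:
  assumes "\<And>k c. c \<in> sd_simp n k \<Longrightarrow> f k c \<in> sobj X k"
    and "\<And>k c. c \<notin> sd_simp n k \<Longrightarrow> f k c = undefined"
    and "\<And>m k \<theta> c. mono_op m k \<theta> \<Longrightarrow> c \<in> sd_simp n k \<Longrightarrow>
      f m (sd_op m \<theta> c) = sop X m k \<theta> (f k c)"
  shows "f \<in> sd_hom n X"
  using assms unfolding sd_hom_def by blast

lemma sd_homD:
  assumes "f \<in> sd_hom n X"
  shows sd_hom_in_sobj: "c \<in> sd_simp n k \<Longrightarrow> f k c \<in> sobj X k"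
    and sd_hom_undefined: "c \<notin> sd_simp n k \<Longrightarrow> f k c = undefined"
    and sd_hom_natural:
      "mono_op m k \<theta> \<Longrightarrow> c \<in> sd_simp n k \<Longrightarrow> f m (sd_op m \<theta> c) = sop X m k \<theta> (f k c)"
  using assms unfolding sd_hom_def by blast+

lemma sop_Ex_vertex:
  "A \<noteq> {} \<Longrightarrow> A \<subseteq> {0..m} \<Longrightarrow>
    sop (Ex X) m k \<theta> f 0 (vertex_chain A) = f 0 (vertex_chain (\<theta> ` A))"
  by (simp add: vertex_chain_in_sd_simp sd_map_vertex_chain)

lemma sd_hom_Ex_vertex_retract:
  assumes f: "f \<in> sd_hom n (Ex X)" and c: "c \<in> sd_simp n k"
    and \<rho>: "mono_op k k \<rho>" "\<And>a. a \<in> A \<Longrightarrow> \<rho> a = a" and A: "A \<noteq> {}" "A \<subseteq> {0..k}"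
  shows "f k (sd_op k \<rho> c) 0 (vertex_chain A) = f k c 0 (vertex_chain A)"
proof -
  have "\<rho> ` A = A" using \<rho>(2) by force
  then show ?thesis
    using sd_hom_natural[OF f \<rho>(1) c] sop_Ex_vertex[OF A, of X k \<rho> "f k c"] by (simp del: sop_Ex)
qed

definition sd_vertex_hom :: "nat \<Rightarrow> (nat set \<Rightarrow> 'v) \<Rightarrow> nat \<Rightarrow> (nat \<Rightarrow> nat set) \<Rightarrow> nat \<Rightarrow> 'v" where
  "sd_vertex_hom k g = (\<lambda>j d. if d \<in> sd_simp k j then restrict (g \<circ> d) {0..j} else undefined)"

lemma sd_vertex_hom_cong:
  assumes "\<And>A. A \<noteq> {} \<Longrightarrow> A \<subseteq> {0..k} \<Longrightarrow> g A = g' A"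
  shows "sd_vertex_hom k g = sd_vertex_hom k g'"
  using assms sd_simp_nonempty sd_simp_subset by (auto simp: sd_vertex_hom_def fun_eq_iff)

lemma sd_hom_Sing_eq_sd_vertex_hom:
  assumes h: "h \<in> sd_hom k (Sing K)"
  shows "h = sd_vertex_hom k (\<lambda>A. h 0 (vertex_chain A) 0)"
proof (intro ext)
  fix j d l
  consider "d \<notin> sd_simp k j" | "d \<in> sd_simp k j" "j < l" | "d \<in> sd_simp k j" "l \<le> j"
    by linarith
  then show "h j d l = sd_vertex_hom k (\<lambda>A. h 0 (vertex_chain A) 0) j d l"
  proof cases
    case 1
    then show ?thesis by (simp add: sd_vertex_hom_def sd_hom_undefined[OF h])
  next
    case 2
    then have "h j d \<in> extensional {0..j}"
      using sd_hom_in_sobj[OF h] sobj_Sing_subset_extensional by blast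
    then show ?thesis using 2 by (simp add: sd_vertex_hom_def extensional_def)
  next
    case 3
    then have "mono_op 0 j (\<lambda>_. l)" by (simp add: mono_op_def)
    from sd_hom_natural[OF h this] 3 have "h 0 (vertex_chain (d l)) 0 = h j d l"
      by (simp add: sd_op_zero)
    then show ?thesis using 3 by (simp add: sd_vertex_hom_def)
  qed
qed

lemma sd_vertex_hom_in_Sing_Delta:
  assumes g: "\<And>A. A \<noteq> {} \<Longrightarrow> A \<subseteq> {0..k} \<Longrightarrow> g A \<le> N"
  shows "sd_vertex_hom k g \<in> sd_hom k (Sing (Delta_cpx N))"
proof (rule sd_homI)
  fix j d assume "d \<in> sd_simp k j"
  then show "sd_vertex_hom k g j d \<in> sobj (Sing (Delta_cpx N)) j"
    using g sd_simp_nonempty sd_simp_subset by (simp add: sd_vertex_hom_def sobj_Sing_Delta)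
next
  fix m j \<theta> d assume "mono_op m j \<theta>" "d \<in> sd_simp k j"
  then show "sd_vertex_hom k g m (sd_op m \<theta> d) =
      sop (Sing (Delta_cpx N)) m j \<theta> (sd_vertex_hom k g j d)"
    using sd_op_in_sd_simp mono_op_le by (auto simp: sd_vertex_hom_def sd_op_def fun_eq_iff)
qed (simp add: sd_vertex_hom_def)

lemma sd_hom_Sing_Delta_vertex_le:
  assumes "h \<in> sd_hom k (Sing (Delta_cpx N))" "A \<noteq> {}" "A \<subseteq> {0..k}"
  shows "h 0 (vertex_chain A) 0 \<le> N"
  using sd_hom_in_sobj[OF assms(1) vertex_chain_in_sd_simp[OF assms(2,3)]]
  by (simp add: sobj_Sing_Delta)

lemma sop_Ex_sd_vertex_hom:
  assumes "\<And>i. i \<le> m \<Longrightarrow> \<theta> i \<le> k"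
  shows "sop (Ex X) m k \<theta> (sd_vertex_hom k g) = sd_vertex_hom m (\<lambda>A. g (\<theta> ` A))"
  using sd_map_in_sd_simp[OF assms] by (auto simp: sd_vertex_hom_def sd_map_def fun_eq_iff)

locale Ex2_Sing_Delta_horn =
  fixes N n K :: nat
    and y :: "nat \<Rightarrow> nat \<Rightarrow> (nat \<Rightarrow> nat set) \<Rightarrow> nat \<Rightarrow> (nat \<Rightarrow> nat set) \<Rightarrow> nat \<Rightarrow> nat"
  assumes n_pos: "0 < n"
    and horn_in_Ex2: "\<And>i. i \<le> n \<Longrightarrow> i \<noteq> K \<Longrightarrow> y i \<in> sd_hom (n - 1) (Ex (Sing (Delta_cpx N)))"
    and horn_compatible: "\<And>i j. i < j \<Longrightarrow> j \<le> n \<Longrightarrow> i \<noteq> K \<Longrightarrow> j \<noteq> K \<Longrightarrow>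
       face (Ex (Ex (Sing (Delta_cpx N)))) (n - 1) i (y j) =
       face (Ex (Ex (Sing (Delta_cpx N)))) (n - 1) (j - 1) (y i)"
begin

definition admissible :: "(nat \<Rightarrow> nat set) \<Rightarrow> nat set \<Rightarrow> nat \<Rightarrow> bool" where
  "admissible c A i \<longleftrightarrow> i \<le> n \<and> i \<noteq> K \<and> i \<notin> c (Max A)"

text \<open>The junk value \<open>0\<close> occurs only for chains lying in no face \<open>i \<noteq> K\<close>, which no
face of the filler sees.\<close>

definition filler_vertex :: "nat \<Rightarrow> (nat \<Rightarrow> nat set) \<Rightarrow> nat set \<Rightarrow> nat" where
  "filler_vertex k c A =
     (if \<exists>i. admissible c A i
      then let i = LEAST i. admissible c A i in y i k (coface_preimage i c) 0 (vertex_chain A) 0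
      else 0)"

definition filler :: "nat \<Rightarrow> (nat \<Rightarrow> nat set) \<Rightarrow> nat \<Rightarrow> (nat \<Rightarrow> nat set) \<Rightarrow> nat \<Rightarrow> nat" where
  "filler k c = (if c \<in> sd_simp n k then sd_vertex_hom k (filler_vertex k c) else undefined)"

lemma admissibleD: "admissible c A i \<Longrightarrow> i \<le> n" "admissible c A i \<Longrightarrow> i \<noteq> K"
  by (simp_all add: admissible_def)

lemma horn_simplex_in_sd_hom:
  "i \<le> n \<Longrightarrow> i \<noteq> K \<Longrightarrow> c \<in> sd_simp (n - 1) k \<Longrightarrow> y i k c \<in> sd_hom k (Sing (Delta_cpx N))"
  using sd_hom_in_sobj[OF horn_in_Ex2] by simp

lemma admissible_preimage_in_sd_simp:
  assumes i: "admissible c A i" and c: "c \<in> sd_simp n k" and A: "A \<noteq> {}" "A \<subseteq> {0..k}"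
  shows "coface_preimage i c \<in> sd_simp (n - 1) k"
proof -
  have "Max A \<le> k"
    using A by (meson Max_in atLeastAtMost_iff finite_atLeastAtMost finite_subset subsetD)
  then have "i \<notin> c 0" using i sd_simp_mono[OF c, of 0 "Max A"] by (auto simp: admissible_def)
  then show ?thesis using coface_preimage_in_sd_simp[OF c admissibleD(1)[OF i]] by blast
qed

lemma horn_faces_agree:
  assumes ii': "i < i'" "i' \<le> n" "i \<noteq> K" "i' \<noteq> K"
    and c: "c \<in> sd_simp n k" and avoid: "\<And>a. i \<notin> c a" "\<And>a. i' \<notin> c a"
  shows "y i k (coface_preimage i c) = y i' k (coface_preimage i' c)"
proof -
  let ?E = "coface_preimage i (coface_preimage i' c)"
  have c_i: "coface_preimage i c \<in> sd_simp (n - 1) k"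
    using coface_preimage_in_sd_simp[OF c _ avoid(1)] ii' by simp
  have c_i': "coface_preimage i' c \<in> sd_simp (n - 1) k"
    using coface_preimage_in_sd_simp[OF c ii'(2) avoid(2)] .
  have "coface i' i = i" using ii' by (simp add: coface_def)
  then have avoid_i: "i \<notin> coface_preimage i' c a" for a
    using avoid(1) by (simp add: coface_preimage_def)
  have "coface i (i' - 1) = i'" using ii' by (auto simp: coface_def)
  then have avoid_i': "i' - 1 \<notin> coface_preimage i c a" for a
    using avoid(2) by (simp add: coface_preimage_def)
  have E: "?E \<in> sd_simp (n - 1 - 1) k"
    using coface_preimage_in_sd_simp[OF c_i' _ avoid_i] ii' by simp
  have "face (Ex (Ex (Sing (Delta_cpx N)))) (n - 1) i (y i') k ?E =
        face (Ex (Ex (Sing (Delta_cpx N)))) (n - 1) (i' - 1) (y i) k ?E"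
    by (simp only: horn_compatible[OF ii'])
  then have "y i' k (sd_map k (coface i) ?E) = y i k (sd_map k (coface (i' - 1)) ?E)"
    by (simp only: face_Ex[OF E])
  moreover have "sd_map k (coface i) ?E = coface_preimage i' c"
    using sd_map_coface_preimage[OF c_i' avoid_i] .
  moreover have "sd_map k (coface (i' - 1)) ?E = coface_preimage i c"
    using sd_map_coface_preimage[OF c_i avoid_i'] coface_preimage_coface_preimage[OF ii'(1)] by simp
  ultimately show ?thesis by simp
qed

lemma horn_vertex_independent:
  assumes adm: "admissible c A i" "admissible c A i'"
    and c: "c \<in> sd_simp n k" and A: "A \<noteq> {}" "A \<subseteq> {0..k}"
  shows "y i k (coface_preimage i c) 0 (vertex_chain A) =
         y i' k (coface_preimage i' c) 0 (vertex_chain A)"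
proof -
  obtain \<rho> where \<rho>: "mono_op k k \<rho>" "\<And>a. a \<in> A \<Longrightarrow> \<rho> a = a" "\<And>a. \<rho> a \<in> A"
    using monotone_retraction_exists[OF A(2,1)] by blast
  define c0 where "c0 = sd_op k \<rho> c"
  have c0: "c0 \<in> sd_simp n k" unfolding c0_def using sd_op_in_sd_simp[OF \<rho>(1) c] .
  have "finite A" using A(2) finite_subset by blast
  then have "Max A \<le> k" "\<rho> a \<le> Max A" for a using A \<rho>(3) by auto
  then have "c0 a \<subseteq> c (Max A)" for a
    using sd_simp_mono[OF c] by (simp add: c0_def sd_op_def)
  then have avoid: "j \<notin> c0 a" if "admissible c A j" for j a
    using that by (auto simp: admissible_def)
  have retract: "y j k (coface_preimage j c) 0 (vertex_chain A) =
                 y j k (coface_preimage j c0) 0 (vertex_chain A)"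
    if j: "admissible c A j" for j
    using sd_hom_Ex_vertex_retract[OF horn_in_Ex2[OF admissibleD[OF j]]
        admissible_preimage_in_sd_simp[OF j c A] \<rho>(1,2) A]
    by (simp add: c0_def coface_preimage_sd_op)
  have "y i k (coface_preimage i c0) = y i' k (coface_preimage i' c0)"
  proof (cases i i' rule: linorder_cases)
    case less
    show ?thesis
      using horn_faces_agree[OF less admissibleD(1)[OF adm(2)] admissibleD(2)[OF adm(1)]
          admissibleD(2)[OF adm(2)] c0 avoid[OF adm(1)] avoid[OF adm(2)]] by simp
  next
    case greater
    show ?thesis
      using horn_faces_agree[OF greater admissibleD(1)[OF adm(1)] admissibleD(2)[OF adm(2)]
          admissibleD(2)[OF adm(1)] c0 avoid[OF adm(2)] avoid[OF adm(1)]] by simp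
  qed simp
  then show ?thesis using retract adm by simp
qed

lemma filler_vertex_eq:
  assumes i: "admissible c A i" and "c \<in> sd_simp n k" "A \<noteq> {}" "A \<subseteq> {0..k}"
  shows "filler_vertex k c A = y i k (coface_preimage i c) 0 (vertex_chain A) 0"
proof -
  let ?L = "LEAST i. admissible c A i"
  have L: "admissible c A ?L" using i by (rule LeastI)
  have "\<exists>i. admissible c A i" using i by blast
  then have "filler_vertex k c A = y ?L k (coface_preimage ?L c) 0 (vertex_chain A) 0"
    by (simp add: filler_vertex_def Let_def)
  also have "\<dots> = y i k (coface_preimage i c) 0 (vertex_chain A) 0"
    using horn_vertex_independent[OF L i assms(2-)] by simp
  finally show ?thesis .
qed

lemma filler_vertex_le:
  assumes c: "c \<in> sd_simp n k" and A: "A \<noteq> {}" "A \<subseteq> {0..k}"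
  shows "filler_vertex k c A \<le> N"
proof (cases "\<exists>i. admissible c A i")
  case True
  then obtain i where i: "admissible c A i" ..
  have "y i k (coface_preimage i c) \<in> sd_hom k (Sing (Delta_cpx N))"
    using horn_simplex_in_sd_hom[OF admissibleD[OF i] admissible_preimage_in_sd_simp[OF i c A]] .
  then show ?thesis using filler_vertex_eq[OF i c A] sd_hom_Sing_Delta_vertex_le A by simp
next
  case False
  then show ?thesis by (simp add: filler_vertex_def)
qed

lemma filler_vertex_sd_op:
  assumes \<theta>: "mono_op m k \<theta>" and c: "c \<in> sd_simp n k" and A: "A \<noteq> {}" "A \<subseteq> {0..m}"
  shows "filler_vertex m (sd_op m \<theta> c) A = filler_vertex k c (\<theta> ` A)"
proof -
  have "finite A" using A(2) finite_subset by blast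
  then have "Max A \<in> A" "Max A \<le> m" using A by auto
  have "Max (\<theta> ` A) = \<theta> (Max A)"
    using \<open>finite A\<close> \<open>Max A \<in> A\<close> A(2) mono_op_mono[OF \<theta>] by (intro Max_eqI) auto
  then have same: "admissible (sd_op m \<theta> c) A = admissible c (\<theta> ` A)"
    using \<open>Max A \<le> m\<close> by (simp add: admissible_def sd_op_def fun_eq_iff)
  have \<theta>A: "\<theta> ` A \<noteq> {}" "\<theta> ` A \<subseteq> {0..k}" using A mono_op_le[OF \<theta>] by auto
  show ?thesis
  proof (cases "\<exists>i. admissible c (\<theta> ` A) i")
    case True
    then obtain i where i: "admissible c (\<theta> ` A) i" ..
    have ci: "coface_preimage i c \<in> sd_simp (n - 1) k"
      using admissible_preimage_in_sd_simp[OF i c \<theta>A] .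
    have "filler_vertex m (sd_op m \<theta> c) A =
          y i m (sd_op m \<theta> (coface_preimage i c)) 0 (vertex_chain A) 0"
      using filler_vertex_eq[OF _ sd_op_in_sd_simp[OF \<theta> c] A] i same
      by (simp add: coface_preimage_sd_op)
    also have "\<dots> =
        sop (Ex (Sing (Delta_cpx N))) m k \<theta> (y i k (coface_preimage i c)) 0 (vertex_chain A) 0"
      by (simp only: sd_hom_natural[OF horn_in_Ex2[OF admissibleD[OF i]] \<theta> ci])
    also have "\<dots> = y i k (coface_preimage i c) 0 (vertex_chain (\<theta> ` A)) 0"
      by (simp only: sop_Ex_vertex[OF A])
    also have "\<dots> = filler_vertex k c (\<theta> ` A)"
      using filler_vertex_eq[OF i c \<theta>A] by simp
    finally show ?thesis .
  next
    case False
    then show ?thesis using same by (simp add: filler_vertex_def)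
  qed
qed

lemma filler_vertex_sd_map_coface:
  assumes c: "c \<in> sd_simp (n - 1) k" and A: "A \<noteq> {}" "A \<subseteq> {0..k}" and i: "i \<le> n" "i \<noteq> K"
  shows "filler_vertex k (sd_map k (coface i) c) A = y i k c 0 (vertex_chain A) 0"
proof -
  have "admissible (sd_map k (coface i) c) A i"
    using i coface_neq[of i, symmetric] by (auto simp: admissible_def sd_map_def)
  then show ?thesis
    using filler_vertex_eq[OF _ sd_map_coface_in_sd_simp[OF n_pos i(1) c] A]
      coface_preimage_sd_map[OF c]
    by simp
qed

lemma filler_in_Ex: "filler \<in> sd_hom n (Ex (Sing (Delta_cpx N)))"
proof (rule sd_homI)
  fix k c assume c: "c \<in> sd_simp n k"
  then show "filler k c \<in> sobj (Ex (Sing (Delta_cpx N))) k"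
    using sd_vertex_hom_in_Sing_Delta filler_vertex_le[OF c] by (simp add: filler_def)
next
  fix m k \<theta> c assume \<theta>: "mono_op m k \<theta>" and c: "c \<in> sd_simp n k"
  have "filler m (sd_op m \<theta> c) = sd_vertex_hom m (filler_vertex m (sd_op m \<theta> c))"
    using sd_op_in_sd_simp[OF \<theta> c] by (simp add: filler_def)
  also have "\<dots> = sd_vertex_hom m (\<lambda>A. filler_vertex k c (\<theta> ` A))"
    using filler_vertex_sd_op[OF \<theta> c] by (rule sd_vertex_hom_cong)
  also have "\<dots> = sop (Ex (Sing (Delta_cpx N))) m k \<theta> (filler k c)"
    using c by (simp add: filler_def sop_Ex_sd_vertex_hom[OF mono_op_le[OF \<theta>]] del: sop_Ex)
  finally show "filler m (sd_op m \<theta> c) = sop (Ex (Sing (Delta_cpx N))) m k \<theta> (filler k c)" .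
qed (simp add: filler_def)

lemma filler_face:
  assumes i: "i \<le> n" "i \<noteq> K"
  shows "face (Ex (Ex (Sing (Delta_cpx N)))) n i filler = y i"
proof (rule ext, rule ext)
  fix k c
  show "face (Ex (Ex (Sing (Delta_cpx N)))) n i filler k c = y i k c"
  proof (cases "c \<in> sd_simp (n - 1) k")
    case True
    have "face (Ex (Ex (Sing (Delta_cpx N)))) n i filler k c
        = sd_vertex_hom k (filler_vertex k (sd_map k (coface i) c))"
      using sd_map_coface_in_sd_simp[OF n_pos i(1) True] by (simp add: face_Ex[OF True] filler_def)
    also have "\<dots> = sd_vertex_hom k (\<lambda>A. y i k c 0 (vertex_chain A) 0)"
      using filler_vertex_sd_map_coface[OF True _ _ i] by (rule sd_vertex_hom_cong)
    also have "\<dots> = y i k c"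
      using sd_hom_Sing_eq_sd_vertex_hom[OF horn_simplex_in_sd_hom[OF i True]] by simp
    finally show ?thesis .
  next
    case False
    then show ?thesis using sd_hom_undefined[OF horn_in_Ex2[OF i] False] by (simp add: face_def)
  qed
qed

end

theorem lemma6p2:
  fixes n :: nat
  shows "kan_complex (Ex (Ex (Sing (Delta_cpx n))))"
  unfolding kan_complex_def
proof (intro allI impI, elim conjE)
  fix m K y
  assume "1 \<le> m"
    and "\<forall>i\<le>m. i \<noteq> K \<longrightarrow> y i \<in> sobj (Ex (Ex (Sing (Delta_cpx n)))) (m - 1)"
    and "\<forall>i j. i < j \<and> j \<le> m \<and> i \<noteq> K \<and> j \<noteq> K \<longrightarrow>
       face (Ex (Ex (Sing (Delta_cpx n)))) (m - 1) i (y j) =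
       face (Ex (Ex (Sing (Delta_cpx n)))) (m - 1) (j - 1) (y i)"
  then interpret Ex2_Sing_Delta_horn n m K y
    by unfold_locales auto
  show "\<exists>x\<in>sobj (Ex (Ex (Sing (Delta_cpx n)))) m. \<forall>i\<le>m. i \<noteq> K \<longrightarrow>
      face (Ex (Ex (Sing (Delta_cpx n)))) m i x = y i"
    using filler_in_Ex filler_face by auto
qed

end
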